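(* Let $Y$ be a Hausdorff space and $g:[0,1]\to Y$ a continuous surjection. The following are equivalent: (a) $g$ is arcwise increasing; (b) $g$ is hereditarily irreducible; (c) $g$ is strongly irreducible; (d) $g$ is almost injective.
   Context: For a continuous map $g:X\to Y$ between continua: $g$ is almost injective if $\{x: g^{-1}(g(x))=\{x\}\}$ is dense in $X$; irreducible if $g(K)\subsetneq g(X)$ for every proper subcontinuum $K\subsetneq X$; hereditarily irreducible if $g(A)\subsetneq g(B)$ for all subcontinua $A\subsetneq B$ of $X$; strongly irreducible if $g(A)\subsetneq g(X)$ for every closed $A\subsetneq X$; arcwise increasing if $g(A)\subsetneq g(B)$ for all arcs $A\subsetneq B$ in $X$. *)

theory Defs
  imports "HOL-Analysis.Analysis"
begin

definition subcontinuum :: "'a topology \<Rightarrow> 'a set \<Rightarrow> bool" where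
  "subcontinuum X K \<longleftrightarrow> K \<noteq> {} \<and> compactin X K \<and> connectedin X K"

definition arc_in :: "'a topology \<Rightarrow> 'a set \<Rightarrow> bool" where
  "arc_in X A \<longleftrightarrow> A \<subseteq> topspace X \<and>
     (subtopology X A) homeomorphic_space (top_of_set {0..1::real})"

definition almost_injective :: "'a topology \<Rightarrow> ('a \<Rightarrow> 'b) \<Rightarrow> bool" where
  "almost_injective X g \<longleftrightarrow>
     X closure_of {x \<in> topspace X. {x' \<in> topspace X. g x' = g x} = {x}} = topspace X"

definition irreducible_map :: "'a topology \<Rightarrow> ('a \<Rightarrow> 'b) \<Rightarrow> bool" where
  "irreducible_map X g \<longleftrightarrow>
     (\<forall>K. subcontinuum X K \<and> K \<subset> topspace X \<longrightarrow> g ` K \<subset> g ` topspace X)"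

definition hereditarily_irreducible :: "'a topology \<Rightarrow> ('a \<Rightarrow> 'b) \<Rightarrow> bool" where
  "hereditarily_irreducible X g \<longleftrightarrow>
     (\<forall>A B. subcontinuum X A \<and> subcontinuum X B \<and> A \<subset> B \<longrightarrow> g ` A \<subset> g ` B)"

definition strongly_irreducible :: "'a topology \<Rightarrow> ('a \<Rightarrow> 'b) \<Rightarrow> bool" where
  "strongly_irreducible X g \<longleftrightarrow>
     (\<forall>A. closedin X A \<and> A \<subset> topspace X \<longrightarrow> g ` A \<subset> g ` topspace X)"

definition arcwise_increasing :: "'a topology \<Rightarrow> ('a \<Rightarrow> 'b) \<Rightarrow> bool" where
  "arcwise_increasing X g \<longleftrightarrow>
     (\<forall>A B. arc_in X A \<and> arc_in X B \<and> A \<subset> B \<longrightarrow> g ` A \<subset> g ` B)"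

end

theory Submission
  imports Defs
begin

text \<open>Subcontinua of an interval are closed intervals and arcs are the nondegenerate ones, which
  makes (a) \<open>\<longleftrightarrow>\<close> (b) immediate. If \<open>A \<subset> B\<close> are intervals, \<open>B - A\<close> contains an open gap, and
  removing the gap from the domain leaves a proper closed set containing \<open>A\<close>; this gives
  (c) \<open>\<Longrightarrow>\<close> (b). For (d) \<open>\<Longrightarrow>\<close> (c), a proper closed set misses a point whose fibre is a singleton.

  The substantial step is (b) \<open>\<Longrightarrow>\<close> (d). If the points with singleton fibre are not dense, some
  interval \<open>[s,t]\<close> consists of points having a twin (a point with the same value) at distance at
  least \<open>1/(n+1)\<close> below or above them, for some \<open>n\<close>. These countably many sets are closed since
  \<open>Y\<close> is Hausdorff, so by Baire one of them contains an interval \<open>[p,q]\<close> shorter than \<open>1/(n+1)\<close>.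
  If every point of \<open>[p,q]\<close> has a twin \<open>1/(n+1)\<close> below it, then \<open>g[0,q] = g[0,p]\<close>, contradicting
  hereditary irreducibility; twins above give \<open>g[p,1] = g[q,1]\<close>.\<close>

section \<open>Subcontinua and arcs of a subset of the real line\<close>

lemma homeomorphic_space_top_of_set_iff:
  "top_of_set S homeomorphic_space top_of_set T \<longleftrightarrow> S homeomorphic T"
proof
  assume "top_of_set S homeomorphic_space top_of_set T"
  then obtain f g where "homeomorphic_maps (top_of_set S) (top_of_set T) f g"
    unfolding homeomorphic_space_def by blast
  then have "homeomorphism S T f g"
    unfolding homeomorphic_maps_def homeomorphism_def
    by (auto simp: continuous_map_subtopology_eu image_subset_iff_funcset)
      (force simp: image_iff Pi_iff)+
  then show "S homeomorphic T"
    unfolding homeomorphic_def by blast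
next
  assume "S homeomorphic T"
  then obtain f g where "homeomorphism S T f g"
    unfolding homeomorphic_def by blast
  then have "homeomorphic_maps (top_of_set S) (top_of_set T) f g"
    unfolding homeomorphic_maps_def homeomorphism_def
    by (auto simp: continuous_map_subtopology_eu image_subset_iff_funcset)
  then show "top_of_set S homeomorphic_space top_of_set T"
    unfolding homeomorphic_space_def by blast
qed

lemma subcontinuum_top_of_set_real_iff:
  fixes S :: "real set"
  shows "subcontinuum (top_of_set S) K \<longleftrightarrow> K \<subseteq> S \<and> (\<exists>a b. a \<le> b \<and> K = {a..b})"
proof -
  have "subcontinuum (top_of_set S) K \<longleftrightarrow> K \<subseteq> S \<and> K \<noteq> {} \<and> compact K \<and> connected K"
    unfolding subcontinuum_def
    by (auto simp: compactin_subtopology connectedin_subtopology connectedin_iff_connected)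
  moreover have "K \<noteq> {} \<and> compact K \<and> connected K \<longleftrightarrow> (\<exists>a b. a \<le> b \<and> K = {a..b})"
    using connected_compact_interval_1[of K] by fastforce
  ultimately show ?thesis
    by blast
qed

lemma subcontinuum_top_of_set_realE:
  fixes S :: "real set"
  assumes "subcontinuum (top_of_set S) K"
  obtains a b where "a \<le> b" "K = {a..b}" "K \<subseteq> S"
  using assms unfolding subcontinuum_top_of_set_real_iff by blast

lemma arc_in_top_of_set_real_iff:
  fixes S :: "real set"
  shows "arc_in (top_of_set S) A \<longleftrightarrow> A \<subseteq> S \<and> (\<exists>a b. a < b \<and> A = {a..b})"
proof
  assume "arc_in (top_of_set S) A"
  then have "A \<subseteq> S" and hom: "A homeomorphic {0..1::real}"
    unfolding arc_in_def
    by (auto simp: subtopology_subtopology Int_absorb1 homeomorphic_space_top_of_set_iff)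
  have "compact A" "connected A"
    using homeomorphic_compactness[OF hom] homeomorphic_connectedness[OF hom] by auto
  then obtain a b where ab: "A = {a..b}"
    using connected_compact_interval_1 by blast
  have "a < b"
  proof (rule ccontr)
    assume "\<not> a < b"
    then have "finite A"
      using ab by (cases "a = b") auto
    then have "finite {0..1::real}"
      using homeomorphic_finite homeomorphic_sym hom by blast
    then show False
      using infinite_Icc[of "0::real" 1] by simp
  qed
  then show "A \<subseteq> S \<and> (\<exists>a b. a < b \<and> A = {a..b})"
    using \<open>A \<subseteq> S\<close> ab by blast
next
  assume "A \<subseteq> S \<and> (\<exists>a b. a < b \<and> A = {a..b})"
  then show "arc_in (top_of_set S) A"
    unfolding arc_in_def
    using homeomorphic_closed_intervals_real[of _ _ 0 1]
    by (auto simp: subtopology_subtopology Int_absorb1 homeomorphic_space_top_of_set_iff)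
qed

lemma Icc_psubset_Icc_cases:
  fixes a b c d :: real
  assumes "a \<le> b" "{a..b} \<subset> {c..d}"
  shows "c < a \<and> b \<le> d \<or> c \<le> a \<and> b < d"
  using assms by (auto simp: atLeastatMost_psubset_iff)

lemma Icc_psubset_Icc_gap:
  fixes a b c d :: real
  assumes "a \<le> b" "{a..b} \<subset> {c..d}"
  obtains p q where "p < q" "{p<..<q} \<subseteq> {c..d} - {a..b}"
proof (cases "c < a")
  case True
  then show ?thesis
    using assms by (intro that[of c a]) (auto simp: atLeastatMost_psubset_iff)
next
  case False
  then show ?thesis
    using assms by (intro that[of b d]) (auto simp: atLeastatMost_psubset_iff)
qed

lemma Icc_subinterval_ball:
  fixes s t x e :: real
  assumes "s \<le> x" "x \<le> t" "s < t" "e > 0"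
  obtains p q where "s \<le> p" "p < q" "q \<le> t" "{p..q} \<subseteq> ball x e"
proof (cases "x < t")
  case True
  then show ?thesis
    using assms by (intro that[of x "min (x + e/2) t"]) (auto simp: dist_real_def)
next
  case False
  then show ?thesis
    using assms by (intro that[of "max (x - e/2) s" x]) (auto simp: dist_real_def)
qed

lemma Icc_countable_closed_cover:
  fixes s t :: real
  assumes "s < t" "countable \<F>" "\<And>F. F \<in> \<F> \<Longrightarrow> closed F" "{s..t} \<subseteq> \<Union>\<F>"
  obtains F p q where "F \<in> \<F>" "s \<le> p" "p < q" "q \<le> t" "{p..q} \<subseteq> F"
proof -
  define S where "S = {s..t}"
  have "\<exists>F\<in>\<F>. \<not> S \<subseteq> closure (S - F)"
  proof (rule ccontr)
    assume dense: "\<not> ?thesis"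
    have "\<F> \<noteq> {}"
      using assms(1,4) by auto
    have "S \<subseteq> closure (\<Inter>((\<lambda>F. S - F) ` \<F>))"
    proof (rule Baire)
      fix T assume "T \<in> (\<lambda>F. S - F) ` \<F>"
      then obtain F where "F \<in> \<F>" "T = S \<inter> - F"
        by blast
      then show "openin (top_of_set S) T \<and> S \<subseteq> closure T"
        using dense assms(3) by (auto intro: openin_open_Int simp: Diff_eq open_Compl)
    qed (use assms(2) S_def in auto)
    moreover have "\<Inter>((\<lambda>F. S - F) ` \<F>) = {}"
      using \<open>\<F> \<noteq> {}\<close> assms(4) unfolding S_def by blast
    ultimately show False
      using assms(1) unfolding S_def by simp
  qed
  then obtain F x where F: "F \<in> \<F>" "x \<in> S" "x \<notin> closure (S - F)"
    by blast
  then obtain e where "e > 0" and e: "\<And>y. y \<in> S - F \<Longrightarrow> \<not> dist y x < e"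
    unfolding closure_approachable by auto
  obtain p q where pq: "s \<le> p" "p < q" "q \<le> t" "{p..q} \<subseteq> ball x e"
    using Icc_subinterval_ball[of s x t e] F(2) \<open>e > 0\<close> assms(1) unfolding S_def by auto
  have "{p..q} \<subseteq> F"
  proof
    fix y assume "y \<in> {p..q}"
    then have "dist y x < e" "y \<in> S"
      using pq unfolding S_def by (auto simp: dist_commute)
    then show "y \<in> F"
      using e by blast
  qed
  then show thesis
    using that F(1) pq by blast
qed

section \<open>The elementary implications\<close>

lemma hereditarily_irreducibleD:
  assumes "hereditarily_irreducible X g" "subcontinuum X A" "subcontinuum X B" "A \<subset> B"
  shows "g ` A \<subset> g ` B"
  using assms unfolding hereditarily_irreducible_def by simp

lemma strongly_irreducibleD:
  assumes "strongly_irreducible X g" "closedin X A" "A \<subset> topspace X"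
  shows "g ` A \<subset> g ` topspace X"
  using assms unfolding strongly_irreducible_def by simp

lemma arcwise_increasingD:
  assumes "arcwise_increasing X g" "arc_in X A" "arc_in X B" "A \<subset> B"
  shows "g ` A \<subset> g ` B"
  using assms unfolding arcwise_increasing_def by simp

lemma almost_injective_imp_strongly_irreducible:
  assumes "almost_injective X g"
  shows "strongly_irreducible X g"
  unfolding strongly_irreducible_def
proof (intro allI impI)
  fix A assume A: "closedin X A \<and> A \<subset> topspace X"
  let ?G = "{x \<in> topspace X. {x' \<in> topspace X. g x' = g x} = {x}}"
  obtain z where z: "z \<in> topspace X - A"
    using A by blast
  have "z \<in> X closure_of ?G"
    using assms z unfolding almost_injective_def by auto
  moreover have "openin X (topspace X - A)"
    using A by blast
  ultimately obtain y where y: "y \<in> ?G" "y \<in> topspace X - A"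
    using z unfolding in_closure_of by blast
  then have fibre: "{x' \<in> topspace X. g x' = g y} = {y}"
    by simp
  have "w = y" if "w \<in> A" "g w = g y" for w
  proof -
    have "w \<in> {x' \<in> topspace X. g x' = g y}"
      using that A by auto
    then show "w = y"
      unfolding fibre by simp
  qed
  then have "g y \<notin> g ` A"
    using y(2) by auto
  then show "g ` A \<subset> g ` topspace X"
    using A y by blast
qed

lemma arcwise_increasing_imp_hereditarily_irreducible:
  fixes S :: "real set"
  assumes "arcwise_increasing (top_of_set S) g"
  shows "hereditarily_irreducible (top_of_set S) g"
  unfolding hereditarily_irreducible_def
proof (intro allI impI, elim conjE)
  fix A B
  assume "subcontinuum (top_of_set S) A" "subcontinuum (top_of_set S) B" "A \<subset> B"
  moreover obtain a b where "a \<le> b" "A = {a..b}" "A \<subseteq> S"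
    by (rule subcontinuum_top_of_set_realE[OF \<open>subcontinuum (top_of_set S) A\<close>])
  moreover obtain c d where "c \<le> d" "B = {c..d}" "B \<subseteq> S"
    by (rule subcontinuum_top_of_set_realE[OF \<open>subcontinuum (top_of_set S) B\<close>])
  ultimately have "c \<le> a" "b \<le> d" "c < a \<or> b < d"
    using Icc_psubset_Icc_cases[of a b c d] by auto
  then obtain a' b' where "a' < b'" "A \<subseteq> {a'..b'}" "{a'..b'} \<subset> B"
  proof (cases "c < a")
    case True
    then show ?thesis
      using that[of "(c + a) / 2" b] \<open>a \<le> b\<close> \<open>b \<le> d\<close> \<open>A = {a..b}\<close> \<open>B = {c..d}\<close>
      by (auto simp: atLeastatMost_psubset_iff)
  next
    case False
    then show ?thesis
      using that[of a "(b + d) / 2"] \<open>c \<le> a\<close> \<open>a \<le> b\<close> \<open>c < a \<or> b < d\<close> \<open>A = {a..b}\<close> \<open>B = {c..d}\<close>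
      by (auto simp: atLeastatMost_psubset_iff)
  qed
  have "c \<le> a'" "b' \<le> d"
    using \<open>a' < b'\<close> \<open>{a'..b'} \<subset> B\<close> \<open>B = {c..d}\<close> by auto
  then have "arc_in (top_of_set S) {a'..b'}" "arc_in (top_of_set S) B"
    using \<open>a' < b'\<close> \<open>{a'..b'} \<subset> B\<close> \<open>B = {c..d}\<close> \<open>B \<subseteq> S\<close>
    unfolding arc_in_top_of_set_real_iff by auto
  then have "g ` {a'..b'} \<subset> g ` B"
    using arcwise_increasingD[OF assms] \<open>{a'..b'} \<subset> B\<close> by simp
  then show "g ` A \<subset> g ` B"
    using image_mono[OF \<open>A \<subseteq> {a'..b'}\<close>] by (rule subset_psubset_trans[rotated])
qed

lemma hereditarily_irreducible_imp_arcwise_increasing: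
  fixes S :: "real set"
  assumes "hereditarily_irreducible (top_of_set S) g"
  shows "arcwise_increasing (top_of_set S) g"
  unfolding arcwise_increasing_def
proof (intro allI impI)
  fix A B assume "arc_in (top_of_set S) A \<and> arc_in (top_of_set S) B \<and> A \<subset> B"
  then have "subcontinuum (top_of_set S) A" "subcontinuum (top_of_set S) B" "A \<subset> B"
    unfolding arc_in_top_of_set_real_iff subcontinuum_top_of_set_real_iff
    by (blast intro: less_imp_le)+
  then show "g ` A \<subset> g ` B"
    by (rule hereditarily_irreducibleD[OF assms])
qed

lemma strongly_irreducible_imp_hereditarily_irreducible:
  fixes S :: "real set"
  assumes "strongly_irreducible (top_of_set S) g"
  shows "hereditarily_irreducible (top_of_set S) g"
  unfolding hereditarily_irreducible_def
proof (intro allI impI, elim conjE)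
  fix A B
  assume "subcontinuum (top_of_set S) A" "subcontinuum (top_of_set S) B" "A \<subset> B"
  moreover obtain a b where "a \<le> b" "A = {a..b}" "A \<subseteq> S"
    by (rule subcontinuum_top_of_set_realE[OF \<open>subcontinuum (top_of_set S) A\<close>])
  moreover obtain c d where "c \<le> d" "B = {c..d}" "B \<subseteq> S"
    by (rule subcontinuum_top_of_set_realE[OF \<open>subcontinuum (top_of_set S) B\<close>])
  ultimately obtain p q where "p < q" "{p<..<q} \<subseteq> B - A"
    using Icc_psubset_Icc_gap[of a b c d] by blast
  define C where "C = S - {p<..<q}"
  have "closedin (top_of_set S) C"
    unfolding C_def Diff_eq by (intro closedin_closed_Int) (simp add: closed_Compl)
  moreover have "(p + q) / 2 \<in> {p<..<q}"
    using \<open>p < q\<close> by auto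
  then have "C \<subset> S"
    using \<open>{p<..<q} \<subseteq> B - A\<close> \<open>B \<subseteq> S\<close> unfolding C_def by blast
  ultimately have proper: "g ` C \<subset> g ` S"
    using strongly_irreducibleD[OF assms] by simp
  \<comment> \<open>Removing the gap from \<open>S\<close> loses no value unless \<open>B\<close> has values that \<open>A\<close> lacks.\<close>
  have "A \<subseteq> C"
    using \<open>A \<subset> B\<close> \<open>B \<subseteq> S\<close> \<open>{p<..<q} \<subseteq> B - A\<close> unfolding C_def by blast
  moreover have "g ` S \<subseteq> g ` C \<union> g ` B"
    unfolding C_def using \<open>{p<..<q} \<subseteq> B - A\<close> by blast
  ultimately have "g ` A \<noteq> g ` B"
  proof (intro notI)
    assume "A \<subseteq> C" "g ` S \<subseteq> g ` C \<union> g ` B" "g ` A = g ` B"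
    then have "g ` S \<subseteq> g ` C"
      using image_mono[of A C g] by blast
    then show False
      using proper by blast
  qed
  then show "g ` A \<subset> g ` B"
    using \<open>A \<subset> B\<close> by blast
qed

section \<open>Hereditarily irreducible maps of the unit interval are almost injective\<close>

definition twins_below :: "(real \<Rightarrow> 'b) \<Rightarrow> real \<Rightarrow> real set" where
  "twins_below g \<delta> = {x \<in> {0..1}. \<exists>y\<in>{0..1}. y + \<delta> \<le> x \<and> g y = g x}"

definition twins_above :: "(real \<Rightarrow> 'b) \<Rightarrow> real \<Rightarrow> real set" where
  "twins_above g \<delta> = {x \<in> {0..1}. \<exists>y\<in>{0..1}. x + \<delta> \<le> y \<and> g y = g x}"

lemma compact_equal_value_pairs:
  assumes "Hausdorff_space Y" "continuous_map (top_of_set S) Y g" "compact S"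
  shows "compact {z \<in> S \<times> S. g (fst z) = g (snd z)}"
proof -
  have "continuous_map (top_of_set (S \<times> S)) Y (g \<circ> fst)"
       "continuous_map (top_of_set (S \<times> S)) Y (g \<circ> snd)"
    using continuous_map_compose[OF continuous_map_fst[of "top_of_set S" "top_of_set S"] assms(2)]
      continuous_map_compose[OF continuous_map_snd[of "top_of_set S" "top_of_set S"] assms(2)]
    by (simp_all add: prod_topology_subtopology_eu)
  then have "closedin (top_of_set (S \<times> S)) {z \<in> S \<times> S. g (fst z) = g (snd z)}"
    using closedin_continuous_maps_eq[OF assms(1)] by fastforce
  then show ?thesis
    using closedin_compact[OF compact_Times[OF assms(3) assms(3)]] by blast
qed

lemma
  assumes "Hausdorff_space Y" "continuous_map (top_of_set {0..1}) Y g"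
  shows closed_twins_below: "closed (twins_below g \<delta>)"
    and closed_twins_above: "closed (twins_above g \<delta>)"
proof -
  let ?D = "{z \<in> {0..1} \<times> {0..1}. g (fst z) = g (snd z)}"
  have "compact ?D"
    using compact_equal_value_pairs[OF assms] by simp
  have "compact (fst ` (?D \<inter> {z. snd z + \<delta> \<le> fst z}))"
       "compact (fst ` (?D \<inter> {z. fst z + \<delta> \<le> snd z}))"
    by (intro compact_continuous_image continuous_intros compact_Int_closed \<open>compact ?D\<close>
        closed_Collect_le; simp)+
  moreover have "twins_below g \<delta> = fst ` (?D \<inter> {z. snd z + \<delta> \<le> fst z})"
                "twins_above g \<delta> = fst ` (?D \<inter> {z. fst z + \<delta> \<le> snd z})"
    unfolding twins_below_def twins_above_def by (force simp: image_iff)+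
  ultimately show "closed (twins_below g \<delta>)" "closed (twins_above g \<delta>)"
    by (simp_all add: compact_imp_closed)
qed

lemma twins_below_contains_no_interval:
  assumes "hereditarily_irreducible (top_of_set {0..1}) g" "\<delta> > 0" "0 \<le> p" "p < q" "q \<le> 1"
  shows "\<not> {p..q} \<subseteq> twins_below g \<delta>"
proof
  assume twins: "{p..q} \<subseteq> twins_below g \<delta>"
  define q' where "q' = min q (p + \<delta> / 2)"
  have "p < q'" "q' \<le> q" "q' < p + \<delta>"
    using assms unfolding q'_def by auto
  then have "subcontinuum (top_of_set {0..1}) {0..p}" "subcontinuum (top_of_set {0..1}) {0..q'}"
    "{0..p} \<subset> {0..q'}"
    using assms unfolding subcontinuum_top_of_set_real_iff by auto
  then have "g ` {0..p} \<subset> g ` {0..q'}"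
    by (rule hereditarily_irreducibleD[OF assms(1)])
  then obtain x where x: "x \<in> {0..q'}" "g x \<notin> g ` {0..p}"
    by blast
  then have "p < x"
    by (metis atLeastAtMost_iff image_eqI not_le)
  then have "x \<in> twins_below g \<delta>"
    using twins x \<open>q' \<le> q\<close> by auto
  then obtain y where "y \<in> {0..1}" "y + \<delta> \<le> x" "g y = g x"
    unfolding twins_below_def by blast
  moreover have "y \<le> p"
    using calculation x \<open>q' < p + \<delta>\<close> by auto
  ultimately show False
    using x by (metis atLeastAtMost_iff image_eqI)
qed

lemma twins_above_contains_no_interval:
  assumes "hereditarily_irreducible (top_of_set {0..1}) g" "\<delta> > 0" "0 \<le> p" "p < q" "q \<le> 1"
  shows "\<not> {p..q} \<subseteq> twins_above g \<delta>"
proof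
  assume twins: "{p..q} \<subseteq> twins_above g \<delta>"
  define p' where "p' = max p (q - \<delta> / 2)"
  have "p' < q" "p \<le> p'" "q < p' + \<delta>"
    using assms unfolding p'_def by auto
  then have "subcontinuum (top_of_set {0..1}) {q..1}" "subcontinuum (top_of_set {0..1}) {p'..1}"
    "{q..1} \<subset> {p'..1}"
    using assms unfolding subcontinuum_top_of_set_real_iff by auto
  then have "g ` {q..1} \<subset> g ` {p'..1}"
    by (rule hereditarily_irreducibleD[OF assms(1)])
  then obtain x where x: "x \<in> {p'..1}" "g x \<notin> g ` {q..1}"
    by blast
  then have "x < q"
    by (metis atLeastAtMost_iff image_eqI not_le)
  then have "x \<in> twins_above g \<delta>"
    using twins x \<open>p \<le> p'\<close> by auto
  then obtain y where "y \<in> {0..1}" "x + \<delta> \<le> y" "g y = g x"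
    unfolding twins_above_def by blast
  moreover have "q \<le> y"
    using calculation x \<open>q < p' + \<delta>\<close> by auto
  ultimately show False
    using x by (metis atLeastAtMost_iff image_eqI)
qed

lemma not_almost_injective_unit_interval:
  fixes g :: "real \<Rightarrow> 'b"
  assumes "\<not> almost_injective (top_of_set {0..1}) g"
  obtains s t where "0 \<le> s" "s < t" "t \<le> 1" "\<And>x. x \<in> {s..t} \<Longrightarrow> \<exists>y\<in>{0..1}. y \<noteq> x \<and> g y = g x"
proof -
  let ?G = "{x \<in> {0..1::real}. {x' \<in> {0..1}. g x' = g x} = {x}}"
  have "top_of_set {0..1} closure_of ?G \<noteq> {0..1}"
    using assms unfolding almost_injective_def by simp
  moreover have "top_of_set {0..1} closure_of ?G \<subseteq> {0..1}"
    using closure_of_subset_topspace[of "top_of_set {0..1::real}" ?G] by simp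
  ultimately obtain x0 where "x0 \<in> {0..1}" "x0 \<notin> top_of_set {0..1} closure_of ?G"
    by blast
  then obtain T where T: "openin (top_of_set {0..1}) T" "x0 \<in> T" "T \<inter> ?G = {}"
    unfolding in_closure_of by auto
  then obtain e where "e > 0" "ball x0 e \<inter> {0..1} \<subseteq> T"
    unfolding openin_contains_ball by blast
  moreover have "0 \<le> x0" "x0 \<le> 1"
    using \<open>x0 \<in> {0..1}\<close> by auto
  then obtain s t where "0 \<le> s" "s < t" "t \<le> 1" "{s..t} \<subseteq> ball x0 e"
    using \<open>e > 0\<close> by (rule Icc_subinterval_ball[OF _ _ zero_less_one])
  ultimately have "{s..t} \<subseteq> T"
    by auto
  have "\<exists>y\<in>{0..1}. y \<noteq> x \<and> g y = g x" if "x \<in> {s..t}" for x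
  proof -
    have "x \<in> {0..1}" "x \<in> T"
      using that \<open>{s..t} \<subseteq> T\<close> \<open>0 \<le> s\<close> \<open>t \<le> 1\<close> by auto
    then have "{x' \<in> {0..1}. g x' = g x} \<noteq> {x}"
      using T(3) by blast
    then show ?thesis
      using \<open>x \<in> {0..1}\<close> by blast
  qed
  then show thesis
    using that \<open>0 \<le> s\<close> \<open>s < t\<close> \<open>t \<le> 1\<close> by blast
qed

lemma hereditarily_irreducible_imp_almost_injective:
  fixes g :: "real \<Rightarrow> 'b"
  assumes "Hausdorff_space Y" "continuous_map (top_of_set {0..1}) Y g"
    and "hereditarily_irreducible (top_of_set {0..1}) g"
  shows "almost_injective (top_of_set {0..1}) g"
proof (rule ccontr)
  assume "\<not> almost_injective (top_of_set {0..1}) g"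
  then obtain s t where st: "0 \<le> s" "s < t" "t \<le> 1"
    and twin: "\<And>x. x \<in> {s..t} \<Longrightarrow> \<exists>y\<in>{0..1}. y \<noteq> x \<and> g y = g x"
    by (metis not_almost_injective_unit_interval)
  define \<delta> :: "nat \<Rightarrow> real" where "\<delta> n = 1 / Suc n" for n
  have "\<delta> n > 0" for n
    unfolding \<delta>_def by simp
  define \<F> where "\<F> = range (\<lambda>n. twins_below g (\<delta> n)) \<union> range (\<lambda>n. twins_above g (\<delta> n))"
  have "countable \<F>"
    unfolding \<F>_def by simp
  moreover have "closed F" if "F \<in> \<F>" for F
    using that closed_twins_below[OF assms(1,2)] closed_twins_above[OF assms(1,2)]
    unfolding \<F>_def by blast
  moreover have "{s..t} \<subseteq> \<Union>\<F>"
  proof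
    fix x assume x: "x \<in> {s..t}"
    then obtain y where y: "y \<in> {0..1}" "y \<noteq> x" "g y = g x"
      using twin by blast
    then obtain n where "\<delta> n < \<bar>y - x\<bar>"
      using reals_Archimedean[of "\<bar>y - x\<bar>"] unfolding \<delta>_def by (auto simp: inverse_eq_divide)
    then consider "y + \<delta> n \<le> x" | "x + \<delta> n \<le> y"
      by linarith
    then have "x \<in> twins_below g (\<delta> n) \<or> x \<in> twins_above g (\<delta> n)"
      using x y st unfolding twins_below_def twins_above_def by cases auto
    then show "x \<in> \<Union>\<F>"
      unfolding \<F>_def by blast
  qed
  ultimately obtain F p q where "F \<in> \<F>" "s \<le> p" "p < q" "q \<le> t" "{p..q} \<subseteq> F"
    using \<open>s < t\<close> by (metis Icc_countable_closed_cover)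
  then obtain n where "F = twins_below g (\<delta> n) \<or> F = twins_above g (\<delta> n)"
    unfolding \<F>_def by blast
  then show False
    using twins_below_contains_no_interval[OF assms(3) \<open>\<delta> n > 0\<close>, of p q]
      twins_above_contains_no_interval[OF assms(3) \<open>\<delta> n > 0\<close>, of p q]
      \<open>s \<le> p\<close> \<open>p < q\<close> \<open>q \<le> t\<close> \<open>{p..q} \<subseteq> F\<close> st
    by auto
qed

theorem lemma2p2:
  fixes Y :: "'b topology" and g :: "real \<Rightarrow> 'b"
  assumes "Hausdorff_space Y"
    and "continuous_map (top_of_set {0..1}) Y g"
    and "g ` {0..1} = topspace Y"
  shows "(arcwise_increasing (top_of_set {0..1}) g \<longleftrightarrow> hereditarily_irreducible (top_of_set {0..1}) g)
       \<and> (hereditarily_irreducible (top_of_set {0..1}) g \<longleftrightarrow> strongly_irreducible (top_of_set {0..1}) g)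
       \<and> (strongly_irreducible (top_of_set {0..1}) g \<longleftrightarrow> almost_injective (top_of_set {0..1}) g)"
  using arcwise_increasing_imp_hereditarily_irreducible hereditarily_irreducible_imp_arcwise_increasing
    strongly_irreducible_imp_hereditarily_irreducible almost_injective_imp_strongly_irreducible
    hereditarily_irreducible_imp_almost_injective[OF assms(1,2)]
  by blast

end
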